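(* Let $\mathcal{C}_1$ and $\mathcal{C}_2$ be two maximal commuting classes of two-qubit Pauli operators ($d=4$) that belong to a complete set of maximal commuting classes. Then there do not exist two further maximal commuting Pauli classes $\mathcal{C}_3'$ and $\mathcal{C}_4'$ (with $\mathcal{C}_1,\mathcal{C}_2,\mathcal{C}_3',\mathcal{C}_4'$ pairwise disjoint) such that the common eigenbases of $\mathcal{C}_1,\mathcal{C}_2,\mathcal{C}_3',\mathcal{C}_4'$ form a weakly unextendible set of four mutually unbiased bases in $\mathbb{C}^4$.
   Context: Two-qubit Pauli operators are the tensor products $P_1\otimes P_2$ with $P_k\in\{I,X,Y,Z\}$. A maximal commuting class in $d=4$ is a set of $3$ mutually commuting non-identity two-qubit Pauli operators. A complete set of classes is a family of $5$ pairwise disjoint maximal commuting classes whose union is the set of all $15$ non-identity two-qubit Pauli operators. Two orthonormal bases of $\mathbb{C}^d$ are mutually unbiased if $|\langle a|b\rangle|=1/\sqrt d$ for all vectors $a$ of the first and $b$ of the second; common eigenbases of pairwise disjoint maximal commuting Pauli classes are mutually unbiased. A set of mutually unbiased bases obtained as common eigenbases of Pauli classes is weakly unextendible if there is no further basis, unbiased to all of them, that is the common eigenbasis of a maximal commuting class of Pauli operators. *)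

theory Defs
  imports "Jordan_Normal_Form.Matrix"
begin

datatype pauli = PI | PX | PY | PZ

definition pauli_mat :: "pauli \<Rightarrow> complex mat" where
  "pauli_mat p = (case p of
      PI \<Rightarrow> mat_of_rows_list 2 [[1, 0], [0, 1]]
    | PX \<Rightarrow> mat_of_rows_list 2 [[0, 1], [1, 0]]
    | PY \<Rightarrow> mat_of_rows_list 2 [[0, - \<i>], [\<i>, 0]]
    | PZ \<Rightarrow> mat_of_rows_list 2 [[1, 0], [0, -1]])"

text \<open>Kronecker (tensor) product of two 2x2 matrices, basis |ab> indexed by 2a+b.\<close>
definition kron2 :: "complex mat \<Rightarrow> complex mat \<Rightarrow> complex mat" where
  "kron2 A B = mat 4 4 (\<lambda>(i, j). A $$ (i div 2, j div 2) * B $$ (i mod 2, j mod 2))"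

definition two_qubit_pauli :: "pauli \<Rightarrow> pauli \<Rightarrow> complex mat" where
  "two_qubit_pauli p q = kron2 (pauli_mat p) (pauli_mat q)"

definition nonid_paulis :: "complex mat set" where
  "nonid_paulis = {two_qubit_pauli p q | p q. (p, q) \<noteq> (PI, PI)}"

definition commute :: "complex mat \<Rightarrow> complex mat \<Rightarrow> bool" where
  "commute A B \<longleftrightarrow> A * B = B * A"

definition max_comm_class :: "complex mat set \<Rightarrow> bool" where
  "max_comm_class C \<longleftrightarrow> C \<subseteq> nonid_paulis \<and> card C = 3 \<and>
     (\<forall>A\<in>C. \<forall>B\<in>C. commute A B)"

definition complete_set :: "complex mat set set \<Rightarrow> bool" where
  "complete_set F \<longleftrightarrow> card F = 5 \<and> (\<forall>C\<in>F. max_comm_class C) \<and>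
     (\<forall>C\<in>F. \<forall>D\<in>F. C \<noteq> D \<longrightarrow> C \<inter> D = {}) \<and> \<Union>F = nonid_paulis"

definition braket :: "complex vec \<Rightarrow> complex vec \<Rightarrow> complex" where
  "braket a b = (\<Sum>i<4. cnj (a $ i) * b $ i)"

definition onb4 :: "complex vec set \<Rightarrow> bool" where
  "onb4 B \<longleftrightarrow> card B = 4 \<and> (\<forall>v\<in>B. dim_vec v = 4) \<and>
     (\<forall>a\<in>B. \<forall>b\<in>B. braket a b = (if a = b then 1 else 0))"

definition eigenvector :: "complex mat \<Rightarrow> complex vec \<Rightarrow> bool" where
  "eigenvector A v \<longleftrightarrow> v \<noteq> 0\<^sub>v (dim_vec v) \<and> (\<exists>c. A *\<^sub>v v = c \<cdot>\<^sub>v v)"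

definition common_eigenbasis :: "complex mat set \<Rightarrow> complex vec set \<Rightarrow> bool" where
  "common_eigenbasis C B \<longleftrightarrow> onb4 B \<and> (\<forall>v\<in>B. \<forall>A\<in>C. eigenvector A v)"

definition unbiased :: "complex vec set \<Rightarrow> complex vec set \<Rightarrow> bool" where
  "unbiased B1 B2 \<longleftrightarrow> onb4 B1 \<and> onb4 B2 \<and>
     (\<forall>a\<in>B1. \<forall>b\<in>B2. cmod (braket a b) = 1 / sqrt 4)"

definition weakly_unextendible :: "complex vec set set \<Rightarrow> bool" where
  "weakly_unextendible Bs \<longleftrightarrow>
     \<not> (\<exists>C B. max_comm_class C \<and> common_eigenbasis C B \<and> B \<notin> Bs \<and>
            (\<forall>B'\<in>Bs. unbiased B B'))"

end

theory Submission
  imports Defs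
begin

text \<open>
  Label a two-qubit Pauli operator by \<open>x \<in> {I,X,Y,Z}\<^sup>2\<close>. Two such operators commute iff
  their labels have an even number of anticommuting factors, and a maximal commuting class is a
  set \<open>{a, b, ab}\<close> of three pairwise commuting nonidentity labels. For unit common
  eigenvectors \<open>v\<close>, \<open>w\<close> of two disjoint classes, the Fierz identity
  \<open>\<Sum>\<^sub>x \<langle>v|P\<^sub>x|v\<rangle>\<langle>w|P\<^sub>x|w\<rangle> = 4 |\<langle>v|w\<rangle>|\<^sup>2\<close>
  collapses to its identity term, since \<open>\<langle>v|P\<^sub>x|v\<rangle> = 0\<close> whenever \<open>P\<^sub>x\<close>
  anticommutes with an operator having \<open>v\<close> as eigenvector; so \<open>|\<langle>v|w\<rangle>|\<^sup>2 = 1/4\<close>.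
  Given four pairwise disjoint classes, each of the three remaining labels commutes with exactly
  six others but with at most one member of each given class, so the remaining labels form a
  fifth class. Its common eigenbasis is unbiased to the four given ones, hence no four Pauli
  MUBs are weakly unextendible.
\<close>

type_synonym pauli_label = "pauli \<times> pauli"

fun pauli_entry :: "pauli \<Rightarrow> nat \<Rightarrow> nat \<Rightarrow> complex" where
  "pauli_entry PI a b = (if a = b then 1 else 0)"
| "pauli_entry PX a b = (if a = b then 0 else 1)"
| "pauli_entry PY a b = (if a = b then 0 else if a = 0 then - \<i> else \<i>)"
| "pauli_entry PZ a b = (if a = b then (if a = 0 then 1 else -1) else 0)"

lemma less_2_iff: "(a::nat) < 2 \<longleftrightarrow> a = 0 \<or> a = 1" by auto
lemma less_4_iff: "(a::nat) < 4 \<longleftrightarrow> a = 0 \<or> a = 1 \<or> a = 2 \<or> a = 3" by auto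

lemma sum_lessThan_2: "(\<Sum>k<(2::nat). f k) = f 0 + (f 1 :: 'a::comm_monoid_add)"
  by (simp add: eval_nat_numeral)
lemma sum_lessThan_4: "(\<Sum>k<(4::nat). f k) = f 0 + f 1 + f 2 + (f 3 :: 'a::comm_monoid_add)"
  by (simp add: eval_nat_numeral)

lemma ex_less_2_iff: "(\<exists>i<2. P i) \<longleftrightarrow> P 0 \<or> P (1::nat)"
  using less_2_iff by auto
lemma ex_less_4_iff: "(\<exists>i<4. P i) \<longleftrightarrow> P 0 \<or> P 1 \<or> P 2 \<or> P (3::nat)"
  using less_4_iff by auto
lemma all_less_4_iff: "(\<forall>i<4. P i) \<longleftrightarrow> P 0 \<and> P 1 \<and> P 2 \<and> P (3::nat)"
  using less_4_iff by auto

lemma div_mod_2_eq_iff: "((i::nat) div 2 = k div 2 \<and> i mod 2 = k mod 2) \<longleftrightarrow> i = k"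
  by (metis div_mult_mod_eq)

lemma pauli_mat_index: "a < 2 \<Longrightarrow> b < 2 \<Longrightarrow> pauli_mat p $$ (a, b) = pauli_entry p a b"
  by (cases p; auto simp: pauli_mat_def mat_of_rows_list_def less_2_cases_iff)

lemma pauli_entry_hermitian: "a < 2 \<Longrightarrow> b < 2 \<Longrightarrow> cnj (pauli_entry p a b) = pauli_entry p b a"
  unfolding less_2_iff by (cases p; auto)

lemma pauli_entry_nonzero: "\<exists>a<2. \<exists>b<2. pauli_entry p a b \<noteq> 0"
  unfolding ex_less_2_iff by (cases p; auto)

lemma UNIV_pauli: "(UNIV :: pauli set) = {PI, PX, PY, PZ}"
  using pauli.exhaust by auto

lemma finite_UNIV_pauli[simp]: "finite (UNIV :: pauli set)"
  by (simp add: UNIV_pauli)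

lemma pauli_entry_completeness:
  "a < 2 \<Longrightarrow> b < 2 \<Longrightarrow> c < 2 \<Longrightarrow> d < 2 \<Longrightarrow>
   (\<Sum>p\<in>UNIV. pauli_entry p a b * pauli_entry p c d) = (if a = d \<and> b = c then 2 else 0)"
  unfolding UNIV_pauli less_2_iff by auto

definition pauli_prod_entry :: "pauli \<Rightarrow> pauli \<Rightarrow> nat \<Rightarrow> nat \<Rightarrow> complex" where
  "pauli_prod_entry p q a b = (\<Sum>k<2. pauli_entry p a k * pauli_entry q k b)"

definition paulis_anticommute :: "pauli \<Rightarrow> pauli \<Rightarrow> bool" where
  "paulis_anticommute p q \<longleftrightarrow> p \<noteq> PI \<and> q \<noteq> PI \<and> p \<noteq> q"

fun pauli_mult :: "pauli \<Rightarrow> pauli \<Rightarrow> pauli" where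
  "pauli_mult PI q = q" | "pauli_mult p PI = p"
| "pauli_mult PX PX = PI" | "pauli_mult PY PY = PI" | "pauli_mult PZ PZ = PI"
| "pauli_mult PX PY = PZ" | "pauli_mult PY PX = PZ" | "pauli_mult PY PZ = PX"
| "pauli_mult PZ PY = PX" | "pauli_mult PZ PX = PY" | "pauli_mult PX PZ = PY"

fun pauli_phase :: "pauli \<Rightarrow> pauli \<Rightarrow> complex" where
  "pauli_phase PX PY = \<i>" | "pauli_phase PY PX = - \<i>"
| "pauli_phase PY PZ = \<i>" | "pauli_phase PZ PY = - \<i>"
| "pauli_phase PZ PX = \<i>" | "pauli_phase PX PZ = - \<i>"
| "pauli_phase _ _ = 1"

lemma pauli_phase_nonzero: "pauli_phase p q \<noteq> 0"
  by (cases p; cases q; auto)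

lemma pauli_prod_entry_eq:
  "a < 2 \<Longrightarrow> b < 2 \<Longrightarrow> pauli_prod_entry p q a b = pauli_phase p q * pauli_entry (pauli_mult p q) a b"
  unfolding less_2_iff pauli_prod_entry_def sum_lessThan_2 by (cases p; cases q; auto)

lemma pauli_prod_entry_swap:
  "a < 2 \<Longrightarrow> b < 2 \<Longrightarrow>
   pauli_prod_entry p q a b = (if paulis_anticommute p q then -1 else 1) * pauli_prod_entry q p a b"
  unfolding less_2_iff pauli_prod_entry_def sum_lessThan_2 paulis_anticommute_def
  by (cases p; cases q; auto)

lemma pauli_prod_entry_self: "a < 2 \<Longrightarrow> b < 2 \<Longrightarrow> pauli_prod_entry p p a b = (if a = b then 1 else 0)"
  by (simp add: pauli_prod_entry_eq; cases p; auto)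

definition pauli_op :: "pauli_label \<Rightarrow> complex mat" where
  "pauli_op x = two_qubit_pauli (fst x) (snd x)"

definition pauli_op_entry :: "pauli_label \<Rightarrow> nat \<Rightarrow> nat \<Rightarrow> complex" where
  "pauli_op_entry x i j = pauli_entry (fst x) (i div 2) (j div 2) * pauli_entry (snd x) (i mod 2) (j mod 2)"

lemma dim_pauli_op[simp]: "dim_row (pauli_op x) = 4" "dim_col (pauli_op x) = 4"
  by (simp_all add: pauli_op_def two_qubit_pauli_def kron2_def)

lemma pauli_op_index: "i < 4 \<Longrightarrow> j < 4 \<Longrightarrow> pauli_op x $$ (i, j) = pauli_op_entry x i j"
  by (simp add: pauli_op_def two_qubit_pauli_def kron2_def pauli_op_entry_def pauli_mat_index)

lemma pauli_op_entry_hermitian: "i < 4 \<Longrightarrow> j < 4 \<Longrightarrow> cnj (pauli_op_entry x i j) = pauli_op_entry x j i"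
  by (simp add: pauli_op_entry_def pauli_entry_hermitian)

lemma pauli_op_entry_inj: "x \<noteq> y \<Longrightarrow> \<exists>i<4. \<exists>j<4. pauli_op_entry x i j \<noteq> pauli_op_entry y i j"
  unfolding ex_less_4_iff pauli_op_entry_def
  by (cases x; cases y; rename_tac a b c d; case_tac a; case_tac b; case_tac c; case_tac d; simp)

lemma inj_pauli_op: "inj pauli_op"
proof (rule injI)
  fix x y assume eq: "pauli_op x = pauli_op y"
  show "x = y"
  proof (rule ccontr)
    assume "x \<noteq> y"
    then obtain i j where "i < 4" "j < 4" "pauli_op_entry x i j \<noteq> pauli_op_entry y i j"
      using pauli_op_entry_inj by blast
    thus False using eq pauli_op_index by metis
  qed
qed

lemma sum_pauli_op_entry_prod:
  "i < 4 \<Longrightarrow> j < 4 \<Longrightarrow> (\<Sum>k<4. pauli_op_entry x i k * pauli_op_entry y k j) =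
   pauli_prod_entry (fst x) (fst y) (i div 2) (j div 2) * pauli_prod_entry (snd x) (snd y) (i mod 2) (j mod 2)"
  unfolding less_4_iff sum_lessThan_4 pauli_prod_entry_def sum_lessThan_2 pauli_op_entry_def
  by (elim disjE; simp; simp add: algebra_simps)

lemma pauli_op_mult_index:
  "i < 4 \<Longrightarrow> j < 4 \<Longrightarrow> (pauli_op x * pauli_op y) $$ (i, j) =
   pauli_prod_entry (fst x) (fst y) (i div 2) (j div 2) * pauli_prod_entry (snd x) (snd y) (i mod 2) (j mod 2)"
  by (simp add: scalar_prod_def pauli_op_index lessThan_atLeast0[symmetric] sum_pauli_op_entry_prod)

lemma pauli_op_entry_completeness:
  assumes "i < 4" "j < 4" "k < 4" "l < 4"
  shows "(\<Sum>x\<in>UNIV. pauli_op_entry x i j * pauli_op_entry x k l) = (if i = l \<and> j = k then 4 else 0)"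
proof -
  have "(\<Sum>x\<in>UNIV. pauli_op_entry x i j * pauli_op_entry x k l) =
     (\<Sum>p\<in>UNIV. \<Sum>q\<in>UNIV. (pauli_entry p (i div 2) (j div 2) * pauli_entry p (k div 2) (l div 2)) *
        (pauli_entry q (i mod 2) (j mod 2) * pauli_entry q (k mod 2) (l mod 2)))"
    unfolding sum.cartesian_product UNIV_Times_UNIV
    by (simp add: pauli_op_entry_def mult_ac case_prod_beta)
  also have "\<dots> = (\<Sum>p\<in>UNIV. pauli_entry p (i div 2) (j div 2) * pauli_entry p (k div 2) (l div 2)) *
      (\<Sum>q\<in>UNIV. pauli_entry q (i mod 2) (j mod 2) * pauli_entry q (k mod 2) (l mod 2))"
    by (simp add: sum_product)
  also have "\<dots> = (if i div 2 = l div 2 \<and> j div 2 = k div 2 then 2 else 0) *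
                  (if i mod 2 = l mod 2 \<and> j mod 2 = k mod 2 then 2 else 0)"
    using assms by (simp add: pauli_entry_completeness)
  also have "\<dots> = (if i = l \<and> j = k then 4 else 0)"
    using div_mod_2_eq_iff[of i l] div_mod_2_eq_iff[of j k] by auto
  finally show ?thesis .
qed

definition labels_commute :: "pauli_label \<Rightarrow> pauli_label \<Rightarrow> bool" where
  "labels_commute x y \<longleftrightarrow>
     (paulis_anticommute (fst x) (fst y) \<longleftrightarrow> paulis_anticommute (snd x) (snd y))"

lemma labels_commute_refl[simp]: "labels_commute x x"
  by (simp add: labels_commute_def paulis_anticommute_def)

lemma pauli_prod_entries_swap:
  "a < 2 \<Longrightarrow> b < 2 \<Longrightarrow> c < 2 \<Longrightarrow> d < 2 \<Longrightarrow>
   pauli_prod_entry (fst x) (fst y) a b * pauli_prod_entry (snd x) (snd y) c d =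
   (if labels_commute x y then 1 else -1) *
   (pauli_prod_entry (fst y) (fst x) a b * pauli_prod_entry (snd y) (snd x) c d)"
  by (simp add: labels_commute_def pauli_prod_entry_swap[of _ _ "fst x"]
      pauli_prod_entry_swap[of _ _ "snd x"] split: if_splits)

lemma commute_pauli_op_iff: "commute (pauli_op x) (pauli_op y) \<longleftrightarrow> labels_commute x y"
proof
  assume xy: "labels_commute x y"
  show "commute (pauli_op x) (pauli_op y)" unfolding commute_def
  proof (rule eq_matI)
    fix i j assume "i < dim_row (pauli_op y * pauli_op x)" "j < dim_col (pauli_op y * pauli_op x)"
    hence ij: "i < 4" "j < 4" by auto
    show "(pauli_op x * pauli_op y) $$ (i, j) = (pauli_op y * pauli_op x) $$ (i, j)"
      unfolding pauli_op_mult_index[OF ij] using ij xy by (subst pauli_prod_entries_swap) auto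
  qed auto
next
  assume comm: "commute (pauli_op x) (pauli_op y)"
  show "labels_commute x y"
  proof (rule ccontr)
    assume anti: "\<not> labels_commute x y"
    obtain a b where ab: "a < 2" "b < 2" "pauli_entry (pauli_mult (fst x) (fst y)) a b \<noteq> 0"
      using pauli_entry_nonzero by blast
    obtain c d where cd: "c < 2" "d < 2" "pauli_entry (pauli_mult (snd x) (snd y)) c d \<noteq> 0"
      using pauli_entry_nonzero by blast
    have idx: "2*a+c < 4" "2*b+d < 4" using ab cd by auto
    have dm: "(2*a+c) div 2 = a" "(2*b+d) div 2 = b" "(2*a+c) mod 2 = c" "(2*b+d) mod 2 = d"
      using ab cd by auto
    have "(pauli_op x * pauli_op y) $$ (2*a+c, 2*b+d) = (pauli_op y * pauli_op x) $$ (2*a+c, 2*b+d)"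
      using comm by (simp add: commute_def)
    hence "pauli_prod_entry (fst x) (fst y) a b * pauli_prod_entry (snd x) (snd y) c d =
           pauli_prod_entry (fst y) (fst x) a b * pauli_prod_entry (snd y) (snd x) c d"
      unfolding pauli_op_mult_index[OF idx] dm .
    hence "pauli_prod_entry (fst x) (fst y) a b * pauli_prod_entry (snd x) (snd y) c d = 0"
      using pauli_prod_entries_swap[OF ab(1,2) cd(1,2), of x y] anti by simp
    thus False using ab cd by (simp add: pauli_prod_entry_eq pauli_phase_nonzero)
  qed
qed

definition pauli_apply :: "pauli_label \<Rightarrow> complex vec \<Rightarrow> complex vec" where
  "pauli_apply x v = vec 4 (\<lambda>i. \<Sum>j<4. pauli_op_entry x i j * v $ j)"

lemma dim_pauli_apply[simp]: "dim_vec (pauli_apply x v) = 4"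
  by (simp add: pauli_apply_def)

lemma pauli_apply_index: "i < 4 \<Longrightarrow> pauli_apply x v $ i = (\<Sum>j<4. pauli_op_entry x i j * v $ j)"
  by (simp add: pauli_apply_def)

lemma pauli_op_mult_vec: "dim_vec v = 4 \<Longrightarrow> pauli_op x *\<^sub>v v = pauli_apply x v"
  by (rule eq_vecI) (auto simp: pauli_apply_def scalar_prod_def pauli_op_index lessThan_atLeast0)

lemma pauli_apply_scale:
  "(\<And>i. i < 4 \<Longrightarrow> u $ i = c * v $ i) \<Longrightarrow> j < 4 \<Longrightarrow> pauli_apply x u $ j = c * pauli_apply x v $ j"
  by (simp add: pauli_apply_index sum_distrib_left mult_ac)

lemma pauli_apply_twice:
  assumes "i < 4"
  shows "pauli_apply x (pauli_apply y v) $ i =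
         (\<Sum>k<4. (\<Sum>j<4. pauli_op_entry x i j * pauli_op_entry y j k) * v $ k)"
proof -
  have "pauli_apply x (pauli_apply y v) $ i =
        (\<Sum>j<4. \<Sum>k<4. pauli_op_entry x i j * pauli_op_entry y j k * v $ k)"
    using assms by (simp add: pauli_apply_index sum_distrib_left mult.assoc)
  also have "\<dots> = (\<Sum>k<4. \<Sum>j<4. pauli_op_entry x i j * pauli_op_entry y j k * v $ k)"
    by (rule sum.swap)
  finally show ?thesis by (simp add: sum_distrib_right)
qed

lemma pauli_apply_anticommute:
  "\<not> labels_commute x y \<Longrightarrow> i < 4 \<Longrightarrow>
   pauli_apply x (pauli_apply y v) $ i = - (pauli_apply y (pauli_apply x v) $ i)"
  unfolding pauli_apply_twice sum_negf[symmetric]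
  by (rule sum.cong) (auto simp: sum_pauli_op_entry_prod pauli_prod_entries_swap[of _ _ _ _ x y])

lemma pauli_apply_involution:
  assumes i: "i < 4"
  shows "pauli_apply y (pauli_apply y v) $ i = v $ i"
proof -
  have "pauli_apply y (pauli_apply y v) $ i = (\<Sum>k<4. (if k = i then v $ k else 0))"
    unfolding pauli_apply_twice[OF i]
  proof (rule sum.cong)
    fix k assume "k \<in> {..<4::nat}"
    hence k: "k < 4" by simp
    have "(\<Sum>j<4. pauli_op_entry y i j * pauli_op_entry y j k) =
          (if i div 2 = k div 2 \<and> i mod 2 = k mod 2 then 1 else 0)"
      unfolding sum_pauli_op_entry_prod[OF i k] using i k by (simp add: pauli_prod_entry_self)
    thus "(\<Sum>j<4. pauli_op_entry y i j * pauli_op_entry y j k) * v $ k = (if k = i then v $ k else 0)"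
      by (simp only: div_mod_2_eq_iff) auto
  qed simp
  also have "\<dots> = v $ i" using i by (simp add: sum.delta)
  finally show ?thesis .
qed

lemma braket_pauli_apply_left: "braket (pauli_apply x u) w = braket u (pauli_apply x w)"
proof -
  have "braket (pauli_apply x u) w = (\<Sum>i<4. \<Sum>j<4. cnj (u $ j) * pauli_op_entry x j i * w $ i)"
    unfolding braket_def
    by (rule sum.cong)
      (auto simp: pauli_apply_index sum_distrib_right pauli_op_entry_hermitian intro!: sum.cong)
  also have "\<dots> = (\<Sum>j<4. \<Sum>i<4. cnj (u $ j) * pauli_op_entry x j i * w $ i)"
    by (rule sum.swap)
  also have "\<dots> = braket u (pauli_apply x w)"
    unfolding braket_def
    by (rule sum.cong) (auto simp: pauli_apply_index sum_distrib_left mult_ac)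
  finally show ?thesis .
qed

lemma braket_swap: "braket w v = cnj (braket v w)"
  by (simp add: braket_def mult.commute)

lemma braket_scale_right: "(\<And>i. i < 4 \<Longrightarrow> u $ i = c * v $ i) \<Longrightarrow> braket z u = c * braket z v"
  unfolding braket_def sum_distrib_left by (rule sum.cong) (auto simp: mult_ac)

lemma braket_scale_left: "(\<And>i. i < 4 \<Longrightarrow> u $ i = c * v $ i) \<Longrightarrow> braket u z = cnj c * braket v z"
  unfolding braket_def sum_distrib_left by (rule sum.cong) (auto simp: mult_ac)

definition expectation :: "complex vec \<Rightarrow> pauli_label \<Rightarrow> complex" where
  "expectation v x = braket v (pauli_apply x v)"

lemma expectation_sum:
  "expectation u x = (\<Sum>i<4. \<Sum>j<4. (cnj (u $ i) * u $ j) * pauli_op_entry x i j)"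
  unfolding expectation_def braket_def
  by (rule sum.cong) (auto simp: pauli_apply_index sum_distrib_left mult_ac)

lemma sum_lessThan_4_double_delta:
  assumes "(i::nat) < 4" "(j::nat) < 4"
  shows "(\<Sum>k<4. \<Sum>l<4. if i = l \<and> j = k then f k l else (0::complex)) = f j i"
proof -
  have "(\<Sum>k<4. \<Sum>l<4. if i = l \<and> j = k then f k l else (0::complex)) =
        (\<Sum>k<4. if k = j then (\<Sum>l<4. if l = i then f k l else 0) else 0)"
    by (rule sum.cong) (auto intro!: sum.cong)
  also have "\<dots> = f j i" using assms by (simp add: sum.delta)
  finally show ?thesis .
qed

text \<open>Fierz identity: the 16 Pauli operators form an orthogonal basis of the \<open>4\<times>4\<close> matrices.\<close>
lemma sum_expectation_products:
  "(\<Sum>x\<in>UNIV. expectation v x * expectation w x) = 4 * (braket v w * braket w v)"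
proof -
  define a where "a i j = cnj (v $ i) * v $ j" for i j
  define b where "b i j = cnj (w $ i) * w $ j" for i j
  have "expectation v x * expectation w x = (\<Sum>i<4. \<Sum>j<4. \<Sum>k<4. \<Sum>l<4.
          (a i j * pauli_op_entry x i j) * (b k l * pauli_op_entry x k l))" for x
    unfolding expectation_sum a_def b_def sum_distrib_right unfolding sum_distrib_left ..
  hence "(\<Sum>x\<in>UNIV. expectation v x * expectation w x) = (\<Sum>x\<in>UNIV. \<Sum>i<4. \<Sum>j<4. \<Sum>k<4. \<Sum>l<4.
          a i j * b k l * (pauli_op_entry x i j * pauli_op_entry x k l))"
    by (simp add: mult_ac)
  also have "\<dots> = (\<Sum>i<4. \<Sum>j<4. \<Sum>k<4. \<Sum>l<4. \<Sum>x\<in>UNIV.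
          a i j * b k l * (pauli_op_entry x i j * pauli_op_entry x k l))"
    by (simp only: sum.swap[of _ "UNIV::pauli_label set"])
  also have "\<dots> = (\<Sum>i<4. \<Sum>j<4. \<Sum>k<4. \<Sum>l<4. if i = l \<and> j = k then 4 * (a i j * b k l) else 0)"
    by (intro sum.cong refl) (simp add: sum_distrib_left[symmetric] pauli_op_entry_completeness)
  also have "\<dots> = (\<Sum>i<4. \<Sum>j<4. 4 * (a i j * b j i))"
    by (intro sum.cong refl) (simp add: sum_lessThan_4_double_delta)
  also have "\<dots> = 4 * (braket v w * braket w v)"
    unfolding braket_def a_def b_def by (simp add: sum_product sum_distrib_left mult_ac)
  finally show ?thesis .
qed

definition eigvec_label :: "pauli_label \<Rightarrow> complex vec \<Rightarrow> bool" where
  "eigvec_label y v \<longleftrightarrow> (\<exists>c. \<forall>i<4. pauli_apply y v $ i = c * v $ i)"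

text \<open>If \<open>P\<^sub>y v = c v\<close> and \<open>P\<^sub>x\<close> anticommutes with \<open>P\<^sub>y\<close>, then
  \<open>c \<langle>v|P\<^sub>x v\<rangle> = \<langle>v|P\<^sub>x P\<^sub>y v\<rangle> = -\<langle>v|P\<^sub>y P\<^sub>x v\<rangle> = -\<langle>P\<^sub>y v|P\<^sub>x v\<rangle> = -cnj c \<langle>v|P\<^sub>x v\<rangle>\<close>,
  where \<open>c\<close> is real (\<open>P\<^sub>y\<close> is Hermitian) and nonzero (\<open>P\<^sub>y\<^sup>2 = 1\<close>).\<close>
lemma expectation_eq_0_if_anticommutes:
  assumes eig: "\<And>i. i < 4 \<Longrightarrow> pauli_apply y v $ i = c * v $ i" and unit: "braket v v = 1"
    and anti: "\<not> labels_commute x y"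
  shows "expectation v x = 0"
proof -
  have c_real: "cnj c = c"
  proof -
    have "braket v (pauli_apply y v) = c" using braket_scale_right[OF eig, of v] unit by simp
    moreover have "braket (pauli_apply y v) v = cnj c" using braket_scale_left[OF eig, of v] unit by simp
    ultimately show ?thesis using braket_pauli_apply_left[of y v v] by simp
  qed
  have c_nonzero: "c \<noteq> 0"
  proof
    assume "c = 0"
    hence "v $ i = 0 * v $ i" if "i < 4" for i
      using pauli_apply_involution[OF that, of y v] pauli_apply_scale[OF eig that, of y] by simp
    hence "braket v v = 0 * braket v v" by (rule braket_scale_right)
    thus False using unit by simp
  qed
  have "braket v (pauli_apply x (pauli_apply y v)) = c * expectation v x"
    unfolding expectation_def by (rule braket_scale_right) (rule pauli_apply_scale[OF eig])
  moreover have "braket v (pauli_apply y (pauli_apply x v)) = cnj c * expectation v x"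
    unfolding expectation_def braket_pauli_apply_left[of y, symmetric] by (rule braket_scale_left[OF eig])
  moreover have "braket v (pauli_apply x (pauli_apply y v)) = - braket v (pauli_apply y (pauli_apply x v))"
    using braket_scale_right[of "pauli_apply x (pauli_apply y v)" "-1"] pauli_apply_anticommute[OF anti]
    by simp
  ultimately have "c * expectation v x = - (c * expectation v x)" using c_real by simp
  thus ?thesis using c_nonzero by simp
qed

definition label_mult :: "pauli_label \<Rightarrow> pauli_label \<Rightarrow> pauli_label" where
  "label_mult x y = (pauli_mult (fst x) (fst y), pauli_mult (snd x) (snd y))"

definition nonid_labels :: "pauli_label set" where
  "nonid_labels = {x. x \<noteq> (PI, PI)}"

definition nonid_label_list :: "pauli_label list" where
  "nonid_label_list = [(PI,PX),(PI,PY),(PI,PZ),(PX,PI),(PX,PX),(PX,PY),(PX,PZ),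
     (PY,PI),(PY,PX),(PY,PY),(PY,PZ),(PZ,PI),(PZ,PX),(PZ,PY),(PZ,PZ)]"

lemma nonid_labels_eq_set: "nonid_labels = set nonid_label_list"
proof -
  have "x \<in> nonid_labels \<longleftrightarrow> x \<in> set nonid_label_list" for x
    by (cases x; rename_tac a b; case_tac a; case_tac b; simp add: nonid_labels_def nonid_label_list_def)
  thus ?thesis by blast
qed

lemma finite_nonid_labels[simp]: "finite nonid_labels"
  by (simp add: nonid_labels_eq_set)

lemma card_nonid_labels: "card nonid_labels = 15"
  by (simp add: nonid_labels_eq_set nonid_label_list_def card_set)

lemma card_commuting_partners:
  assumes "x \<in> nonid_labels"
  shows "card {u \<in> nonid_labels. u \<noteq> x \<and> labels_commute x u} = 6"
proof -
  let ?P = "\<lambda>u. u \<noteq> x \<and> labels_commute x u"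
  have "x \<in> set nonid_label_list" using assms by (simp add: nonid_labels_eq_set)
  hence "length (remdups (filter ?P nonid_label_list)) = 6"
    by (simp only: nonid_label_list_def set_simps insert_iff empty_iff simp_thms)
      (elim disjE; simp add: nonid_label_list_def labels_commute_def paulis_anticommute_def)
  moreover have "{u \<in> nonid_labels. ?P u} = set (filter ?P nonid_label_list)"
    by (auto simp: nonid_labels_eq_set)
  ultimately show ?thesis by (metis card_set)
qed

definition label_class :: "pauli_label set \<Rightarrow> bool" where
  "label_class L \<longleftrightarrow> L \<subseteq> nonid_labels \<and> card L = 3 \<and> (\<forall>y\<in>L. \<forall>z\<in>L. labels_commute y z)"

lemma label_class_finite: "label_class L \<Longrightarrow> finite L"
  by (simp add: label_class_def card_ge_0_finite)

lemma label_classE: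
  assumes "label_class L"
  obtains a b d where "L = {a, b, d}" "a \<noteq> b" "b \<noteq> d" "a \<noteq> d"
  using assms by (auto simp: label_class_def card_3_iff)

lemma commuting_triple_eq_label_mult:
  "x \<in> nonid_labels \<Longrightarrow> y \<in> nonid_labels \<Longrightarrow> z \<in> nonid_labels \<Longrightarrow> x \<noteq> y \<Longrightarrow> x \<noteq> z \<Longrightarrow> y \<noteq> z \<Longrightarrow>
   labels_commute x y \<Longrightarrow> labels_commute x z \<Longrightarrow> labels_commute y z \<Longrightarrow> x = label_mult y z"
  by (cases y; cases z; rename_tac a b c d; case_tac a; case_tac b; case_tac c; case_tac d;
      simp_all add: nonid_labels_def labels_commute_def paulis_anticommute_def label_mult_def;
      cases x; rename_tac e f; case_tac e; case_tac f;
      simp_all add: nonid_labels_def labels_commute_def paulis_anticommute_def label_mult_def)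

lemma outsider_commutes_with_at_most_one:
  assumes L: "label_class L" and x: "x \<in> nonid_labels - L" and yz: "y \<in> L" "z \<in> L" "y \<noteq> z"
    and comm: "labels_commute x y" "labels_commute x z"
  shows False
proof -
  have "card (L - {y, z}) = 1"
    using L yz label_class_finite[OF L] by (simp add: label_class_def card_Diff_subset)
  then obtain w where "L - {y, z} = {w}" by (rule card_1_singletonE)
  hence w: "w \<in> L" "w \<noteq> y" "w \<noteq> z" by auto
  have sub: "L \<subseteq> nonid_labels" and lc: "\<forall>u\<in>L. \<forall>v\<in>L. labels_commute u v"
    using L by (auto simp: label_class_def)
  have "x = label_mult y z"
    by (rule commuting_triple_eq_label_mult) (use x yz comm sub lc in auto)
  moreover have "w = label_mult y z"
    by (rule commuting_triple_eq_label_mult) (use w yz sub lc in auto)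
  ultimately show False using x w by auto
qed

lemma label_class_anticommuting_member:
  assumes L: "label_class L" and x: "x \<in> nonid_labels - L"
  shows "\<exists>y\<in>L. \<not> labels_commute x y"
proof -
  obtain a b d where "L = {a, b, d}" "a \<noteq> b" using L by (rule label_classE)
  thus ?thesis using outsider_commutes_with_at_most_one[OF L x, of a b] by auto
qed

lemma card_commuting_partners_in_class:
  "label_class L \<Longrightarrow> x \<in> nonid_labels - L \<Longrightarrow>
   card ({u \<in> nonid_labels. u \<noteq> x \<and> labels_commute x u} \<inter> L) \<le> 1"
  using outsider_commutes_with_at_most_one[of L x] label_class_finite[of L]
  by (subst One_nat_def, subst card_le_Suc0_iff_eq) auto

lemma complement_of_four_label_classes:
  assumes c: "label_class L1" "label_class L2" "label_class L3" "label_class L4"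
    and d: "L1 \<inter> L2 = {}" "L1 \<inter> L3 = {}" "L1 \<inter> L4 = {}" "L2 \<inter> L3 = {}" "L2 \<inter> L4 = {}" "L3 \<inter> L4 = {}"
  shows "label_class (nonid_labels - (L1 \<union> L2 \<union> L3 \<union> L4))"
proof -
  define R where "R = nonid_labels - (L1 \<union> L2 \<union> L3 \<union> L4)"
  have f: "finite L1" "finite L2" "finite L3" "finite L4" using c label_class_finite by auto
  have "card (L1 \<union> L2 \<union> L3 \<union> L4) = 12"
    using c f d by (simp add: card_Un_disjoint Int_Un_distrib2 label_class_def)
  moreover have "L1 \<union> L2 \<union> L3 \<union> L4 \<subseteq> nonid_labels" using c by (auto simp: label_class_def)
  ultimately have card_R: "card R = 3"
    unfolding R_def using f card_nonid_labels by (simp add: card_Diff_subset)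
  have comm: "labels_commute x y" if x: "x \<in> R" and y: "y \<in> R" and xy: "x \<noteq> y" for x y
  proof -
    define S where "S = {u \<in> nonid_labels. u \<noteq> x \<and> labels_commute x u}"
    have card_S: "card S = 6" unfolding S_def
      by (rule card_commuting_partners) (use x in \<open>simp add: R_def\<close>)
    have in_classes: "card (S \<inter> L1) \<le> 1" "card (S \<inter> L2) \<le> 1" "card (S \<inter> L3) \<le> 1" "card (S \<inter> L4) \<le> 1"
      unfolding S_def using card_commuting_partners_in_class c x by (auto simp: R_def)
    have "S \<subseteq> (S \<inter> L1) \<union> (S \<inter> L2) \<union> (S \<inter> L3) \<union> (S \<inter> L4) \<union> (S \<inter> (R - {x}))"
      unfolding S_def R_def by auto
    hence "card S \<le> card ((S \<inter> L1) \<union> (S \<inter> L2) \<union> (S \<inter> L3) \<union> (S \<inter> L4) \<union> (S \<inter> (R - {x})))"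
      by (rule card_mono[rotated]) (simp add: f R_def)
    also have "\<dots> \<le> card (S \<inter> L1) + card (S \<inter> L2) + card (S \<inter> L3) + card (S \<inter> L4) + card (S \<inter> (R - {x}))"
      by (meson card_Un_le add_le_mono le_refl order_trans)
    finally have "card (S \<inter> (R - {x})) \<ge> 2" using card_S in_classes by linarith
    moreover have "card (R - {x}) = 2" using card_R x by (simp add: R_def)
    ultimately have "S \<inter> (R - {x}) = R - {x}"
      by (metis card_seteq finite_Diff R_def finite_nonid_labels inf_le2)
    thus ?thesis using y xy by (auto simp: S_def)
  qed
  have "R \<subseteq> nonid_labels" by (auto simp: R_def)
  thus ?thesis unfolding R_def[symmetric] label_class_def using card_R comm labels_commute_refl by metis
qed

definition common_eigvec :: "pauli_label set \<Rightarrow> complex vec \<Rightarrow> bool" where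
  "common_eigvec L v \<longleftrightarrow> dim_vec v = 4 \<and> braket v v = 1 \<and> (\<forall>y\<in>L. eigvec_label y v)"

lemma expectation_identity:
  assumes "dim_vec v = 4" "braket v v = 1"
  shows "expectation v (PI, PI) = 1"
proof -
  have "pauli_apply (PI, PI) v $ i = 1 * v $ i" if "i < 4" for i
    using that by (simp add: pauli_apply_index pauli_op_entry_def sum_lessThan_4 less_4_iff; elim disjE; simp)
  thus ?thesis unfolding expectation_def using braket_scale_right assms(2) by (metis mult_1)
qed

lemma expectation_outside_class_eq_0:
  assumes "label_class L" "common_eigvec L v" "x \<in> nonid_labels - L"
  shows "expectation v x = 0"
proof -
  obtain y where "y \<in> L" "\<not> labels_commute x y"
    using label_class_anticommuting_member assms(1,3) by blast
  thus ?thesis using assms(2) expectation_eq_0_if_anticommutes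
    unfolding common_eigvec_def eigvec_label_def by metis
qed

lemma common_eigvecs_unbiased:
  assumes L: "label_class L" and K: "label_class K" and "L \<inter> K = {}"
    and v: "common_eigvec L v" and w: "common_eigvec K w"
  shows "cmod (braket v w) = 1 / sqrt 4"
proof -
  have "finite (UNIV :: pauli_label set)" by (simp flip: UNIV_Times_UNIV)
  hence "(\<Sum>x\<in>UNIV. expectation v x * expectation w x) =
         expectation v (PI, PI) * expectation w (PI, PI) +
         (\<Sum>x\<in>UNIV - {(PI, PI)}. expectation v x * expectation w x)"
    by (simp add: sum.remove)
  also have "\<dots> = 1"
  proof -
    have "expectation v x * expectation w x = 0" if "x \<in> UNIV - {(PI, PI)}" for x
    proof -
      have "x \<in> nonid_labels - L \<or> x \<in> nonid_labels - K"
        using that \<open>L \<inter> K = {}\<close> by (auto simp: nonid_labels_def)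
      thus ?thesis using expectation_outside_class_eq_0 L K v w by fastforce
    qed
    hence "(\<Sum>x\<in>UNIV - {(PI, PI)}. expectation v x * expectation w x) = 0"
      by (rule sum.neutral[rule_format])
    thus ?thesis using v w expectation_identity by (simp add: common_eigvec_def)
  qed
  finally have "4 * (braket v w * cnj (braket v w)) = 1"
    using sum_expectation_products[of v w] braket_swap[of w v] by simp
  hence "complex_of_real (4 * cmod (braket v w) ^ 2) = 1"
    using complex_norm_square[of "braket v w"] by simp
  hence "4 * cmod (braket v w) ^ 2 = 1" by (simp only: of_real_eq_1_iff)
  hence "(2 * cmod (braket v w) - 1) * (2 * cmod (braket v w) + 1) = 0"
    by (simp add: algebra_simps power2_eq_square)
  moreover have "2 * cmod (braket v w) + 1 > 0"
    using norm_ge_zero[of "braket v w"] by linarith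
  ultimately have "cmod (braket v w) = 1 / 2" by simp
  thus ?thesis by simp
qed

definition label_eigenbasis :: "complex vec set \<Rightarrow> pauli_label set \<Rightarrow> bool" where
  "label_eigenbasis B L \<longleftrightarrow> onb4 B \<and> (\<forall>v\<in>B. \<forall>y\<in>L. eigvec_label y v)"

definition inv_sqrt2 :: complex where
  "inv_sqrt2 = complex_of_real (sqrt 2 / 2)"

lemma inv_sqrt2_square[simp]: "inv_sqrt2 * inv_sqrt2 = 1 / 2"
proof -
  have "sqrt 2 / 2 * (sqrt 2 / 2) = (1 / 2 :: real)" by simp
  hence "complex_of_real (sqrt 2 / 2 * (sqrt 2 / 2)) = 1 / 2" by simp
  thus ?thesis unfolding inv_sqrt2_def of_real_mult .
qed

lemma inv_sqrt2_square_mult[simp]: "inv_sqrt2 * (inv_sqrt2 * z) = z / 2"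
  by (simp add: mult.assoc[symmetric])

lemma cnj_inv_sqrt2[simp]: "cnj inv_sqrt2 = inv_sqrt2"
  by (simp add: inv_sqrt2_def)

definition vec4 :: "complex \<Rightarrow> complex \<Rightarrow> complex \<Rightarrow> complex \<Rightarrow> complex vec" where
  "vec4 a b c d = vec 4 (\<lambda>i. if i = 0 then a else if i = 1 then b else if i = 2 then c else d)"

lemma vec4_index[simp]:
  "vec4 a b c d $ 0 = a" "vec4 a b c d $ Suc 0 = b" "vec4 a b c d $ 1 = b"
  "vec4 a b c d $ 2 = c" "vec4 a b c d $ 3 = d" "dim_vec (vec4 a b c d) = 4"
  by (simp_all add: vec4_def)

lemma onb4_insertI:
  assumes "dim_vec a = 4" "dim_vec b = 4" "dim_vec c = 4" "dim_vec d = 4"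
    "braket a a = 1" "braket b b = 1" "braket c c = 1" "braket d d = 1"
    "braket a b = 0" "braket a c = 0" "braket a d = 0" "braket b c = 0" "braket b d = 0" "braket c d = 0"
    "braket b a = 0" "braket c a = 0" "braket d a = 0" "braket c b = 0" "braket d b = 0" "braket d c = 0"
  shows "onb4 {a, b, c, d}"
proof -
  have "a \<noteq> b" "a \<noteq> c" "a \<noteq> d" "b \<noteq> c" "b \<noteq> d" "c \<noteq> d" using assms by auto
  thus ?thesis unfolding onb4_def using assms by auto
qed

lemma eigvec_label_sign:
  "(\<forall>i<4. pauli_apply y v $ i = v $ i) \<or> (\<forall>i<4. pauli_apply y v $ i = - v $ i) \<Longrightarrow> eigvec_label y v"
  unfolding eigvec_label_def by (metis mult_1 mult_minus1)

definition stabilizer_bases :: "(pauli_label set \<times> complex vec set) list" where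
  "stabilizer_bases =
  [({(PI, PX), (PX, PI), (PX, PX)},
    {vec4 (1/2) (1/2) (1/2) (1/2), vec4 (1/2) (1/2) (-1/2) (-1/2),
     vec4 (1/2) (-1/2) (1/2) (-1/2), vec4 (1/2) (-1/2) (-1/2) (1/2)}),
   ({(PI, PX), (PY, PI), (PY, PX)},
    {vec4 (1/2) (1/2) (\<i>/2) (\<i>/2), vec4 (1/2) (1/2) (-\<i>/2) (-\<i>/2),
     vec4 (1/2) (-1/2) (\<i>/2) (-\<i>/2), vec4 (1/2) (-1/2) (-\<i>/2) (\<i>/2)}),
   ({(PI, PX), (PZ, PI), (PZ, PX)},
    {vec4 inv_sqrt2 inv_sqrt2 0 0, vec4 0 0 inv_sqrt2 inv_sqrt2,
     vec4 inv_sqrt2 (-inv_sqrt2) 0 0, vec4 0 0 inv_sqrt2 (-inv_sqrt2)}),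
   ({(PI, PY), (PX, PI), (PX, PY)},
    {vec4 (1/2) (\<i>/2) (1/2) (\<i>/2), vec4 (1/2) (\<i>/2) (-1/2) (-\<i>/2),
     vec4 (1/2) (-\<i>/2) (1/2) (-\<i>/2), vec4 (1/2) (-\<i>/2) (-1/2) (\<i>/2)}),
   ({(PI, PY), (PY, PI), (PY, PY)},
    {vec4 (1/2) (\<i>/2) (\<i>/2) (-1/2), vec4 (1/2) (\<i>/2) (-\<i>/2) (1/2),
     vec4 (1/2) (-\<i>/2) (\<i>/2) (1/2), vec4 (1/2) (-\<i>/2) (-\<i>/2) (-1/2)}),
   ({(PI, PY), (PZ, PI), (PZ, PY)},
    {vec4 inv_sqrt2 (\<i>*inv_sqrt2) 0 0, vec4 0 0 inv_sqrt2 (\<i>*inv_sqrt2),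
     vec4 inv_sqrt2 (-\<i>*inv_sqrt2) 0 0, vec4 0 0 inv_sqrt2 (-\<i>*inv_sqrt2)}),
   ({(PI, PZ), (PX, PI), (PX, PZ)},
    {vec4 inv_sqrt2 0 inv_sqrt2 0, vec4 inv_sqrt2 0 (-inv_sqrt2) 0,
     vec4 0 inv_sqrt2 0 inv_sqrt2, vec4 0 inv_sqrt2 0 (-inv_sqrt2)}),
   ({(PI, PZ), (PY, PI), (PY, PZ)},
    {vec4 inv_sqrt2 0 (\<i>*inv_sqrt2) 0, vec4 inv_sqrt2 0 (-\<i>*inv_sqrt2) 0,
     vec4 0 inv_sqrt2 0 (\<i>*inv_sqrt2), vec4 0 inv_sqrt2 0 (-\<i>*inv_sqrt2)}),
   ({(PI, PZ), (PZ, PI), (PZ, PZ)},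
    {vec4 1 0 0 0, vec4 0 0 1 0, vec4 0 1 0 0, vec4 0 0 0 1}),
   ({(PX, PX), (PY, PY), (PZ, PZ)},
    {vec4 0 inv_sqrt2 inv_sqrt2 0, vec4 inv_sqrt2 0 0 inv_sqrt2,
     vec4 inv_sqrt2 0 0 (-inv_sqrt2), vec4 0 inv_sqrt2 (-inv_sqrt2) 0}),
   ({(PX, PX), (PY, PZ), (PZ, PY)},
    {vec4 (1/2) (\<i>/2) (\<i>/2) (1/2), vec4 (1/2) (-\<i>/2) (-\<i>/2) (1/2),
     vec4 (1/2) (-\<i>/2) (\<i>/2) (-1/2), vec4 (1/2) (\<i>/2) (-\<i>/2) (-1/2)}),
   ({(PX, PY), (PY, PX), (PZ, PZ)},
    {vec4 inv_sqrt2 0 0 (\<i>*inv_sqrt2), vec4 0 inv_sqrt2 (-\<i>*inv_sqrt2) 0,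
     vec4 0 inv_sqrt2 (\<i>*inv_sqrt2) 0, vec4 inv_sqrt2 0 0 (-\<i>*inv_sqrt2)}),
   ({(PX, PY), (PY, PZ), (PZ, PX)},
    {vec4 (1/2) (-1/2) (\<i>/2) (\<i>/2), vec4 (1/2) (1/2) (-\<i>/2) (\<i>/2),
     vec4 (1/2) (1/2) (\<i>/2) (-\<i>/2), vec4 (1/2) (-1/2) (-\<i>/2) (-\<i>/2)}),
   ({(PX, PZ), (PY, PX), (PZ, PY)},
    {vec4 (1/2) (-\<i>/2) (1/2) (\<i>/2), vec4 (1/2) (\<i>/2) (1/2) (-\<i>/2),
     vec4 (1/2) (\<i>/2) (-1/2) (\<i>/2), vec4 (1/2) (-\<i>/2) (-1/2) (-\<i>/2)}),
   ({(PX, PZ), (PY, PY), (PZ, PX)},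
    {vec4 (1/2) (1/2) (1/2) (-1/2), vec4 (1/2) (-1/2) (1/2) (1/2),
     vec4 (1/2) (-1/2) (-1/2) (-1/2), vec4 (1/2) (1/2) (-1/2) (1/2)})]"

lemma stabilizer_bases_eigenbasis: "(L, B) \<in> set stabilizer_bases \<Longrightarrow> label_eigenbasis B L"
  unfolding stabilizer_bases_def label_eigenbasis_def
  by (simp only: set_simps insert_iff empty_iff prod.inject simp_thms)
    (elim disjE conjE; hypsubst; intro conjI onb4_insertI ballI; (elim insertE emptyE)?;
      (rule eigvec_label_sign)?;
      simp add: braket_def all_less_4_iff pauli_apply_index pauli_op_entry_def sum_lessThan_4 algebra_simps)

lemma commuting_pairs_in_stabilizer_classes:
  "\<forall>a\<in>nonid_labels. \<forall>b\<in>nonid_labels. a \<noteq> b \<and> labels_commute a b \<longrightarrow>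
     (\<exists>L\<in>fst ` set stabilizer_bases. {a, b, label_mult a b} \<subseteq> L)"
  unfolding nonid_labels_eq_set
  by (simp add: nonid_label_list_def stabilizer_bases_def labels_commute_def paulis_anticommute_def
      label_mult_def)

lemma label_class_has_eigenbasis:
  assumes L: "label_class L"
  shows "\<exists>B. label_eigenbasis B L"
proof -
  obtain a b d where abd: "L = {a, b, d}" "a \<noteq> b" "b \<noteq> d" "a \<noteq> d" using L by (rule label_classE)
  have sub: "L \<subseteq> nonid_labels" and comm: "\<forall>u\<in>L. \<forall>v\<in>L. labels_commute u v"
    using L by (auto simp: label_class_def)
  have "d = label_mult a b"
    by (rule commuting_triple_eq_label_mult) (use abd sub comm in auto)
  moreover obtain L' B where "(L', B) \<in> set stabilizer_bases" "{a, b, label_mult a b} \<subseteq> L'"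
    using commuting_pairs_in_stabilizer_classes abd sub comm by fastforce
  ultimately have "label_eigenbasis B L'" "L \<subseteq> L'"
    using abd stabilizer_bases_eigenbasis by auto
  thus ?thesis by (auto simp: label_eigenbasis_def)
qed

definition pauli_labels :: "complex mat set \<Rightarrow> pauli_label set" where
  "pauli_labels C = {x \<in> nonid_labels. pauli_op x \<in> C}"

lemma nonid_paulis_eq_image: "nonid_paulis = pauli_op ` nonid_labels"
  by (force simp: nonid_paulis_def nonid_labels_def pauli_op_def)

lemma image_pauli_labels: "C \<subseteq> nonid_paulis \<Longrightarrow> pauli_op ` pauli_labels C = C"
  by (auto simp: pauli_labels_def nonid_paulis_eq_image)

lemma card_image_pauli_op: "card (pauli_op ` L) = card L"
  using inj_pauli_op by (simp add: card_image inj_on_subset)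

lemma label_class_pauli_labels:
  assumes "max_comm_class C"
  shows "label_class (pauli_labels C)"
proof -
  have "C \<subseteq> nonid_paulis" "card C = 3" using assms by (auto simp: max_comm_class_def)
  hence "card (pauli_labels C) = 3" using card_image_pauli_op image_pauli_labels by metis
  moreover have "\<forall>y\<in>pauli_labels C. \<forall>z\<in>pauli_labels C. labels_commute y z"
    using assms by (auto simp: max_comm_class_def pauli_labels_def commute_pauli_op_iff[symmetric])
  ultimately show ?thesis by (auto simp: label_class_def pauli_labels_def)
qed

lemma max_comm_class_image: "label_class L \<Longrightarrow> max_comm_class (pauli_op ` L)"
  by (auto simp: max_comm_class_def label_class_def nonid_paulis_eq_image card_image_pauli_op
      commute_pauli_op_iff)

lemma common_eigvec_of_common_eigenbasis:
  assumes "common_eigenbasis (pauli_op ` L) B" "v \<in> B"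
  shows "common_eigvec L v"
proof -
  have "onb4 B" and eig: "\<forall>A\<in>pauli_op ` L. eigenvector A v"
    using assms by (auto simp: common_eigenbasis_def)
  hence dim: "dim_vec v = 4" and "braket v v = 1" using assms(2) by (auto simp: onb4_def)
  moreover have "eigvec_label y v" if "y \<in> L" for y
  proof -
    have "eigenvector (pauli_op y) v" using eig that by blast
    then obtain c where "pauli_op y *\<^sub>v v = c \<cdot>\<^sub>v v" unfolding eigenvector_def by blast
    hence "pauli_apply y v = c \<cdot>\<^sub>v v" using pauli_op_mult_vec[OF dim] by simp
    thus ?thesis using dim by (auto simp: eigvec_label_def)
  qed
  ultimately show ?thesis by (simp add: common_eigvec_def)
qed

lemma common_eigenbasis_of_label_eigenbasis:
  assumes "label_eigenbasis B L"
  shows "common_eigenbasis (pauli_op ` L) B"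
proof -
  have onb: "onb4 B" using assms by (simp add: label_eigenbasis_def)
  have "eigenvector (pauli_op y) v" if v: "v \<in> B" and y: "y \<in> L" for v y
  proof -
    have dim: "dim_vec v = 4" and unit: "braket v v = 1" using onb v by (auto simp: onb4_def)
    have "eigvec_label y v" using assms v y by (simp add: label_eigenbasis_def)
    then obtain c where c: "\<forall>i<4. pauli_apply y v $ i = c * v $ i"
      unfolding eigvec_label_def by blast
    have "pauli_op y *\<^sub>v v = c \<cdot>\<^sub>v v" unfolding pauli_op_mult_vec[OF dim]
      by (rule eq_vecI) (use c dim in auto)
    moreover have "v \<noteq> 0\<^sub>v 4"
    proof
      assume "v = 0\<^sub>v 4"
      hence "braket v v = 0" by (simp add: braket_def)
      thus False using unit by simp
    qed
    ultimately show ?thesis using dim by (auto simp: eigenvector_def)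
  qed
  thus ?thesis using onb by (auto simp: common_eigenbasis_def)
qed

lemma common_eigenbases_unbiased:
  assumes "label_class L" "label_class K" "L \<inter> K = {}"
    and B: "common_eigenbasis (pauli_op ` L) B" and B': "common_eigenbasis (pauli_op ` K) B'"
  shows "unbiased B B'"
proof -
  have "cmod (braket a b) = 1 / sqrt 4" if "a \<in> B" "b \<in> B'" for a b
    by (rule common_eigvecs_unbiased[OF assms(1-3)])
      (rule common_eigvec_of_common_eigenbasis[OF B that(1)], rule common_eigvec_of_common_eigenbasis[OF B' that(2)])
  thus ?thesis using B B' unfolding unbiased_def common_eigenbasis_def by blast
qed

lemma not_unbiased_self:
  assumes "onb4 B"
  shows "\<not> unbiased B B"
proof
  assume unb: "unbiased B B"
  obtain a where a: "a \<in> B" using assms by (fastforce simp: onb4_def)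
  have "braket a a = 1" using assms a by (simp add: onb4_def)
  moreover have "cmod (braket a a) = 1 / sqrt 4" using unb a by (simp add: unbiased_def)
  ultimately show False by simp
qed

lemma four_pauli_mubs_not_weakly_unextendible:
  assumes classes: "max_comm_class C1" "max_comm_class C2" "max_comm_class C3" "max_comm_class C4"
    and disjoint: "C1 \<inter> C2 = {}" "C1 \<inter> C3 = {}" "C1 \<inter> C4 = {}" "C2 \<inter> C3 = {}" "C2 \<inter> C4 = {}"
      "C3 \<inter> C4 = {}"
    and bases: "common_eigenbasis C1 B1" "common_eigenbasis C2 B2" "common_eigenbasis C3 B3"
      "common_eigenbasis C4 B4"
  shows "\<not> weakly_unextendible {B1, B2, B3, B4}"
proof -
  let ?L = "pauli_labels"
  have labels: "label_class (?L C1)" "label_class (?L C2)" "label_class (?L C3)" "label_class (?L C4)"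
    using classes by (simp_all add: label_class_pauli_labels)
  have images: "pauli_op ` ?L C1 = C1" "pauli_op ` ?L C2 = C2" "pauli_op ` ?L C3 = C3"
    "pauli_op ` ?L C4 = C4"
    using classes image_pauli_labels by (simp_all add: max_comm_class_def)
  define R where "R = nonid_labels - (?L C1 \<union> ?L C2 \<union> ?L C3 \<union> ?L C4)"
  have R: "label_class R"
    unfolding R_def using disjoint
    by (intro complement_of_four_label_classes labels) (auto simp: pauli_labels_def)
  then obtain B where "label_eigenbasis B R" using label_class_has_eigenbasis by blast
  hence B: "common_eigenbasis (pauli_op ` R) B" "onb4 B"
    by (simp_all add: common_eigenbasis_of_label_eigenbasis label_eigenbasis_def)
  have unbiased_B: "unbiased B B'" if "label_class (?L C)" "R \<inter> ?L C = {}"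
    "pauli_op ` ?L C = C" "common_eigenbasis C B'" for C B'
    using common_eigenbases_unbiased[OF R that(1,2) B(1)] that(3,4) by simp
  have "R \<inter> ?L C1 = {}" "R \<inter> ?L C2 = {}" "R \<inter> ?L C3 = {}" "R \<inter> ?L C4 = {}"
    by (auto simp: R_def)
  hence "\<forall>B'\<in>{B1, B2, B3, B4}. unbiased B B'"
    using unbiased_B labels images bases by blast
  moreover have "B \<notin> {B1, B2, B3, B4}" using calculation not_unbiased_self[OF B(2)] by blast
  ultimately show ?thesis
    using max_comm_class_image[OF R] B(1) unfolding weakly_unextendible_def by blast
qed

theorem theorem2:
  assumes "complete_set F" and "C1 \<in> F" and "C2 \<in> F" and "C1 \<noteq> C2"
  shows "\<not> (\<exists>C3 C4 B1 B2 B3 B4.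
            max_comm_class C3 \<and> max_comm_class C4 \<and>
            C1 \<inter> C3 = {} \<and> C1 \<inter> C4 = {} \<and> C2 \<inter> C3 = {} \<and>
            C2 \<inter> C4 = {} \<and> C3 \<inter> C4 = {} \<and>
            common_eigenbasis C1 B1 \<and> common_eigenbasis C2 B2 \<and>
            common_eigenbasis C3 B3 \<and> common_eigenbasis C4 B4 \<and>
            unbiased B1 B2 \<and> unbiased B1 B3 \<and> unbiased B1 B4 \<and>
            unbiased B2 B3 \<and> unbiased B2 B4 \<and> unbiased B3 B4 \<and>
            weakly_unextendible {B1, B2, B3, B4})"
proof
  assume "\<exists>C3 C4 B1 B2 B3 B4.
            max_comm_class C3 \<and> max_comm_class C4 \<and>
            C1 \<inter> C3 = {} \<and> C1 \<inter> C4 = {} \<and> C2 \<inter> C3 = {} \<and>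
            C2 \<inter> C4 = {} \<and> C3 \<inter> C4 = {} \<and>
            common_eigenbasis C1 B1 \<and> common_eigenbasis C2 B2 \<and>
            common_eigenbasis C3 B3 \<and> common_eigenbasis C4 B4 \<and>
            unbiased B1 B2 \<and> unbiased B1 B3 \<and> unbiased B1 B4 \<and>
            unbiased B2 B3 \<and> unbiased B2 B4 \<and> unbiased B3 B4 \<and>
            weakly_unextendible {B1, B2, B3, B4}"
  then obtain C3 C4 B1 B2 B3 B4 where
    "max_comm_class C3" "max_comm_class C4"
    "C1 \<inter> C3 = {}" "C1 \<inter> C4 = {}" "C2 \<inter> C3 = {}" "C2 \<inter> C4 = {}" "C3 \<inter> C4 = {}"
    "common_eigenbasis C1 B1" "common_eigenbasis C2 B2" "common_eigenbasis C3 B3"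
    "common_eigenbasis C4 B4"
    and unextendible: "weakly_unextendible {B1, B2, B3, B4}"
    by blast
  have "max_comm_class C1" "max_comm_class C2" "C1 \<inter> C2 = {}"
    using assms by (auto simp: complete_set_def)
  have "\<not> weakly_unextendible {B1, B2, B3, B4}"
    by (rule four_pauli_mubs_not_weakly_unextendible) fact+
  thus False using unextendible by contradiction
qed

end
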